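(* Assume the hypotheses of Theorem 1 (the triangular array $\sigma_{N1}\ge\cdots\ge\sigma_{NN}>0$ with $\lim_{N\to\infty}\sigma_{N1}(\sum_n\sigma_{Nn}^{-7})(\sum_n\sigma_{Nn}^{-4})^{-3/2}=0$, and a probability density $\pi$ with $|\hat\pi(\omega)|\le C_\pi<1$ for $|\omega|\ge2$). Assume in addition that there exist $\delta,C>0$ with $|\hat\pi(\omega)|\le C|\omega|^{-\delta}$ for all $\omega\ne0$, and that there is a sequence $r_K\to0$ as $K\to\infty$ such that $\sigma_{NK}/\sigma_{N1}<r_K$ for all $N\ge K$. With $$h_N=\Big(\frac1\alpha\sum_{n=1}^N\frac{1}{(2\sigma_{Nn})^4}\int\sin^2\Big(\frac{t}{\sigma_{Nn}}\Big)\frac{\pi(t/\sigma_{N1})}{\sigma_{N1}}\,dt\Big)^{-1/4},\qquad \bar h_N=\Big(\frac1\alpha\sum_{n=1}^N\frac{1}{(2\sigma_{Nn})^4}\cdot\frac12\Big)^{-1/4},$$ we have $\bar h_N/h_N\to1$ as $N\to\infty$.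
   Context: $\hat\pi(\omega)=\int e^{-i\omega t}\pi(t)\,dt$ is the Fourier transform of the integration-time density $\pi$; $\alpha>0$ is fixed. *)

theory Defs
  imports "HOL-Analysis.Analysis"
begin

definition fourier_tf :: "(real \<Rightarrow> real) \<Rightarrow> real \<Rightarrow> complex" where
  "fourier_tf p \<omega> = (LINT t|lborel. exp (- \<i> * complex_of_real (\<omega> * t)) * complex_of_real (p t))"

text \<open>Triangular array: sigma N n for 1 <= n <= N.\<close>
definition h_seq :: "real \<Rightarrow> (nat \<Rightarrow> nat \<Rightarrow> real) \<Rightarrow> (real \<Rightarrow> real) \<Rightarrow> nat \<Rightarrow> real" where
  "h_seq \<alpha> \<sigma> p N =
     ((1 / \<alpha>) * (\<Sum>n=1..N. 1 / (2 * \<sigma> N n) ^ 4 *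
        (LINT t|lborel. (sin (t / \<sigma> N n))\<^sup>2 * p (t / \<sigma> N 1) / \<sigma> N 1))) powr (-1/4)"

definition hbar_seq :: "real \<Rightarrow> (nat \<Rightarrow> nat \<Rightarrow> real) \<Rightarrow> nat \<Rightarrow> real" where
  "hbar_seq \<alpha> \<sigma> N = ((1 / \<alpha>) * (\<Sum>n=1..N. 1 / (2 * \<sigma> N n) ^ 4 * (1/2))) powr (-1/4)"

end

theory Submission
  imports Defs
begin

text \<open>The substitution \<open>t = \<sigma>\<^sub>1 x\<close> and \<open>sin\<^sup>2 y = (1 - cos 2y)/2\<close> turn the integral in \<open>h\<^sub>N\<close>
  into \<open>1/2 - Re (fourier_tf p (2\<sigma>\<^sub>1/\<sigma>\<^sub>n))/2\<close>, so \<open>(hbar\<^sub>N/h\<^sub>N)\<^sup>4 = 1 - A\<^sub>N\<close>, where \<open>A\<^sub>N\<close> is the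
  mean of these Fourier values with weights \<open>\<sigma>\<^sub>n\<^sup>-\<^sup>4\<close>, increasing in \<open>n\<close>. The values are bounded
  by 1, and for \<open>n \<ge> K\<close> the decay of the Fourier transform bounds them by \<open>C (r\<^sub>K/2)\<^sup>\<delta>\<close>.
  Since the weights increase, the first \<open>K - 1\<close> terms carry at most the fraction
  \<open>(K - 1)/(N - K + 1)\<close> of the total weight, so \<open>A\<^sub>N \<rightarrow> 0\<close>.\<close>

lemma fourier_tf_Re:
  assumes "p \<in> borel_measurable lborel" and "integrable lborel p"
  shows "Re (fourier_tf p \<omega>) = (LINT t|lborel. cos (\<omega> * t) * p t)"
proof -
  have "integrable lborel (\<lambda>t. exp (- \<i> * complex_of_real (\<omega> * t)) * complex_of_real (p t))"
    by (rule Bochner_Integration.integrable_bound[where f = "\<lambda>t. complex_of_real (p t)"])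
       (use assms in \<open>auto simp: norm_mult norm_exp_i_times[symmetric]\<close>)
  then show ?thesis
    unfolding fourier_tf_def by (subst integral_Re[symmetric]) (auto simp: Re_exp)
qed

lemma integral_sin_square_rescaled:
  fixes p :: "real \<Rightarrow> real"
  assumes "a > 0" and "b > 0"
    and p_meas: "p \<in> borel_measurable lborel" and p_int: "integrable lborel p"
    and p_total: "(LINT t|lborel. p t) = 1"
  shows "(LINT t|lborel. (sin (t / b))\<^sup>2 * p (t / a) / a) = 1/2 - Re (fourier_tf p (2 * a / b)) / 2"
proof -
  have cos_int: "integrable lborel (\<lambda>x. cos (2 * a / b * x) * p x)"
    by (rule Bochner_Integration.integrable_bound[OF p_int])
       (use p_meas in \<open>auto simp: abs_mult intro!: mult_left_le_one_le\<close>)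
  have "(LINT t|lborel. (sin (t / b))\<^sup>2 * p (t / a) / a)
      = \<bar>a\<bar> *\<^sub>R (LINT x|lborel. (sin ((0 + a * x) / b))\<^sup>2 * p ((0 + a * x) / a) / a)"
    by (rule lborel_integral_real_affine) (use \<open>a > 0\<close> in auto)
  also have "\<dots> = (LINT x|lborel. (sin (a * x / b))\<^sup>2 * p x)"
    using \<open>a > 0\<close> by simp
  also have "\<dots> = (LINT x|lborel. p x / 2 - cos (2 * a / b * x) * p x / 2)"
  proof (rule Bochner_Integration.integral_cong[OF refl])
    fix x
    have "(sin (a * x / b))\<^sup>2 = 1/2 - cos (2 * a / b * x) / 2"
      using cos_double_sin[of "a * x / b"] by (simp add: mult.assoc) (simp add: field_simps)
    then show "(sin (a * x / b))\<^sup>2 * p x = p x / 2 - cos (2 * a / b * x) * p x / 2"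
      by (simp only:) (simp add: algebra_simps)
  qed
  also have "\<dots> = (LINT x|lborel. p x) / 2 - (LINT x|lborel. cos (2 * a / b * x) * p x) / 2"
    using cos_int p_int by simp
  finally show ?thesis
    using p_total fourier_tf_Re[OF p_meas p_int] by simp
qed

lemma abs_weighted_sum_le_head_tail:
  fixes w F :: "nat \<Rightarrow> real" and e :: real
  assumes K: "1 \<le> K" "K \<le> N"
    and w_pos: "\<And>n. 1 \<le> n \<Longrightarrow> n \<le> N \<Longrightarrow> w n > 0"
    and w_mono: "\<And>m n. 1 \<le> m \<Longrightarrow> m \<le> n \<Longrightarrow> n \<le> N \<Longrightarrow> w m \<le> w n"
    and F_bounded: "\<And>n. 1 \<le> n \<Longrightarrow> n \<le> N \<Longrightarrow> \<bar>F n\<bar> \<le> 1"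
    and F_tail: "\<And>n. K \<le> n \<Longrightarrow> n \<le> N \<Longrightarrow> \<bar>F n\<bar> \<le> e"
  shows "\<bar>\<Sum>n=1..N. w n * F n\<bar> \<le> ((real K - 1) / (real N - real K + 1) + e) * (\<Sum>n=1..N. w n)"
proof -
  define q where "q = (real K - 1) / (real N - real K + 1)"
  have q_nonneg: "q \<ge> 0" and e_nonneg: "e \<ge> 0"
    using K F_tail[of K] by (auto simp: q_def)
  have split: "{1..N} = {1..<K} \<union> {K..N}" using K by auto
  have tail_le: "(\<Sum>n\<in>{K..N}. w n) \<le> (\<Sum>n=1..N. w n)"
    by (rule sum_mono2) (use K w_pos in \<open>auto intro: less_imp_le\<close>)
  have head_le: "(\<Sum>n\<in>{1..<K}. w n) \<le> q * (\<Sum>n\<in>{K..N}. w n)"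
  proof -
    have "(\<Sum>n\<in>{1..<K}. w n) \<le> real (card {1..<K}) * w K"
      by (rule sum_bounded_above) (use K in \<open>auto intro: w_mono\<close>)
    also have "\<dots> = q * (real (card {K..N}) * w K)"
      using K by (simp add: q_def of_nat_diff field_simps)
    also have "\<dots> \<le> q * (\<Sum>n\<in>{K..N}. w n)"
      by (intro mult_left_mono q_nonneg sum_bounded_below) (use K in \<open>auto intro: w_mono\<close>)
    finally show ?thesis .
  qed
  have "\<bar>\<Sum>n=1..N. w n * F n\<bar> \<le> (\<Sum>n\<in>{1..<K}. \<bar>w n * F n\<bar>) + (\<Sum>n\<in>{K..N}. \<bar>w n * F n\<bar>)"
    using sum_abs[of "\<lambda>n. w n * F n" "{1..N}"] unfolding split
    by (subst (asm) sum.union_disjoint) auto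
  also have "\<dots> \<le> (\<Sum>n\<in>{1..<K}. w n) + (\<Sum>n\<in>{K..N}. e * w n)"
  proof (intro add_mono sum_mono)
    fix n assume "n \<in> {1..<K}"
    then show "\<bar>w n * F n\<bar> \<le> w n"
      using K w_pos[of n] F_bounded[of n] by (simp add: abs_mult mult_left_le)
  next
    fix n assume "n \<in> {K..N}"
    then show "\<bar>w n * F n\<bar> \<le> e * w n"
      using K w_pos[of n] F_tail[of n] by (simp add: abs_mult mult.commute mult_left_mono)
  qed
  also have "\<dots> \<le> q * (\<Sum>n=1..N. w n) + e * (\<Sum>n=1..N. w n)"
    using head_le tail_le q_nonneg e_nonneg
    by (simp add: sum_distrib_left[symmetric] add_mono mult_left_mono order_trans)
  finally show ?thesis by (simp add: q_def algebra_simps)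
qed

lemma weighted_mean_tendsto_zero:
  fixes w F :: "nat \<Rightarrow> nat \<Rightarrow> real" and e :: "nat \<Rightarrow> real"
  assumes w_pos: "\<And>N n. 1 \<le> n \<Longrightarrow> n \<le> N \<Longrightarrow> w N n > 0"
    and w_mono: "\<And>N m n. 1 \<le> m \<Longrightarrow> m \<le> n \<Longrightarrow> n \<le> N \<Longrightarrow> w N m \<le> w N n"
    and F_bounded: "\<And>N n. 1 \<le> n \<Longrightarrow> n \<le> N \<Longrightarrow> \<bar>F N n\<bar> \<le> 1"
    and F_tail: "\<And>K N n. 1 \<le> K \<Longrightarrow> K \<le> n \<Longrightarrow> n \<le> N \<Longrightarrow> \<bar>F N n\<bar> \<le> e K"
    and e_lim: "e \<longlonglongrightarrow> 0"
  shows "(\<lambda>N. (\<Sum>n=1..N. w N n * F N n) / (\<Sum>n=1..N. w N n)) \<longlonglongrightarrow> 0"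
proof (rule LIMSEQ_I)
  fix \<epsilon> :: real assume "\<epsilon> > 0"
  then have "eventually (\<lambda>K. e K < \<epsilon>/2) sequentially"
    using e_lim by (intro order_tendstoD(2)) auto
  then obtain K where K: "1 \<le> K" and e_K: "e K < \<epsilon>/2"
    by (metis (no_types, lifting) eventually_sequentially max.cobounded1 max.cobounded2)
  show "\<exists>N0. \<forall>N\<ge>N0. norm ((\<Sum>n=1..N. w N n * F N n) / (\<Sum>n=1..N. w N n) - 0) < \<epsilon>"
  proof (intro exI allI impI)
    fix N assume N: "N \<ge> K + nat \<lceil>2 * real K / \<epsilon>\<rceil>"
    then have "K \<le> N" by simp
    have head_small: "(real K - 1) / (real N - real K + 1) < \<epsilon>/2"
    proof -
      have "2 * real K / \<epsilon> < real N - real K + 1"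
        using N by linarith
      then show ?thesis
        using \<open>\<epsilon> > 0\<close> \<open>K \<le> N\<close> by (simp add: field_simps)
    qed
    have S_pos: "(\<Sum>n=1..N. w N n) > 0"
      using K \<open>K \<le> N\<close> w_pos by (intro sum_pos) auto
    have "\<bar>\<Sum>n=1..N. w N n * F N n\<bar>
        \<le> ((real K - 1) / (real N - real K + 1) + e K) * (\<Sum>n=1..N. w N n)"
      by (rule abs_weighted_sum_le_head_tail[OF K \<open>K \<le> N\<close>])
         (auto intro: w_pos w_mono F_bounded F_tail K)
    then have "\<bar>(\<Sum>n=1..N. w N n * F N n) / (\<Sum>n=1..N. w N n)\<bar>
        \<le> (real K - 1) / (real N - real K + 1) + e K"
      using S_pos by (simp add: abs_divide pos_divide_le_eq)
    then show "norm ((\<Sum>n=1..N. w N n * F N n) / (\<Sum>n=1..N. w N n) - 0) < \<epsilon>"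
      using head_small e_K by (simp only: real_norm_def diff_zero)
  qed
qed

text \<open>The mean \<open>A\<^sub>N\<close>; the factor \<open>2\<^sup>-\<^sup>4\<close> in the weights, which cancels, matches \<open>h_seq\<close>.\<close>
definition fourier_weighted_mean :: "(nat \<Rightarrow> nat \<Rightarrow> real) \<Rightarrow> (real \<Rightarrow> real) \<Rightarrow> nat \<Rightarrow> real" where
  "fourier_weighted_mean \<sigma> p N =
     (\<Sum>n=1..N. 1 / (2 * \<sigma> N n) ^ 4 * Re (fourier_tf p (2 * \<sigma> N 1 / \<sigma> N n)))
     / (\<Sum>n=1..N. 1 / (2 * \<sigma> N n) ^ 4)"

lemma fourier_weighted_mean_tendsto_zero:
  fixes \<sigma> :: "nat \<Rightarrow> nat \<Rightarrow> real" and p :: "real \<Rightarrow> real" and r :: "nat \<Rightarrow> real"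
  assumes sigma_pos: "\<And>N n. 1 \<le> n \<Longrightarrow> n \<le> N \<Longrightarrow> \<sigma> N n > 0"
    and sigma_mono: "\<And>N m n. 1 \<le> m \<Longrightarrow> m \<le> n \<Longrightarrow> n \<le> N \<Longrightarrow> \<sigma> N n \<le> \<sigma> N m"
    and fourier_le_1: "\<And>\<omega>. \<bar>\<omega>\<bar> \<ge> 2 \<Longrightarrow> cmod (fourier_tf p \<omega>) \<le> 1"
    and "\<delta> > 0" and "C \<ge> 0"
    and decay: "\<And>\<omega>. \<omega> \<noteq> 0 \<Longrightarrow> cmod (fourier_tf p \<omega>) \<le> C * \<bar>\<omega>\<bar> powr (-\<delta>)"
    and r_lim: "r \<longlonglongrightarrow> 0"
    and r_bound: "\<And>K N. 1 \<le> K \<Longrightarrow> K \<le> N \<Longrightarrow> \<sigma> N K / \<sigma> N 1 < r K"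
  shows "fourier_weighted_mean \<sigma> p \<longlonglongrightarrow> 0"
proof -
  define F where "F N n = Re (fourier_tf p (2 * \<sigma> N 1 / \<sigma> N n))" for N n
  have F_bounded: "\<bar>F N n\<bar> \<le> 1" if "1 \<le> n" "n \<le> N" for N n
  proof -
    have "\<sigma> N n > 0" "\<sigma> N n \<le> \<sigma> N 1"
      using that sigma_pos sigma_mono[of 1 n N] by auto
    then have "\<bar>2 * \<sigma> N 1 / \<sigma> N n\<bar> \<ge> 2"
      by (simp add: field_simps)
    then show ?thesis
      unfolding F_def using abs_Re_le_cmod fourier_le_1 order_trans by blast
  qed
  have F_tail: "\<bar>F N n\<bar> \<le> C * (r K / 2) powr \<delta>" if "1 \<le> K" "K \<le> n" "n \<le> N" for K N n
  proof -
    define \<omega> where "\<omega> = 2 * \<sigma> N 1 / \<sigma> N n"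
    have "\<sigma> N n > 0" "\<sigma> N 1 > 0" "\<sigma> N n \<le> \<sigma> N K" "\<sigma> N K / \<sigma> N 1 < r K"
      using that sigma_pos sigma_mono[of K n N] r_bound by auto
    then have "\<omega> > 0" and "1 / \<omega> \<le> r K / 2"
      by (auto simp: \<omega>_def field_simps)
    have "\<bar>F N n\<bar> \<le> cmod (fourier_tf p \<omega>)"
      unfolding F_def \<omega>_def by (rule abs_Re_le_cmod)
    also have "\<dots> \<le> C * \<bar>\<omega>\<bar> powr (-\<delta>)"
      using decay[of \<omega>] \<open>\<omega> > 0\<close> by simp
    also have "\<dots> = C * (1 / \<omega>) powr \<delta>"
      using \<open>\<omega> > 0\<close> by (simp add: powr_minus_divide powr_divide)
    also have "\<dots> \<le> C * (r K / 2) powr \<delta>"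
      using \<open>1 / \<omega> \<le> r K / 2\<close> \<open>\<omega> > 0\<close> \<open>\<delta> > 0\<close> \<open>C \<ge> 0\<close>
      by (intro mult_left_mono powr_mono2) auto
    finally show ?thesis .
  qed
  have r_pos: "r K > 0" if "1 \<le> K" for K
  proof -
    have "0 < \<sigma> K K / \<sigma> K 1"
      using sigma_pos[of 1 K] sigma_pos[of K K] that by simp
    then show ?thesis
      using r_bound[of K K] that by linarith
  qed
  have "eventually (\<lambda>K. 0 \<le> r K / 2) sequentially"
    using r_pos by (intro eventually_sequentiallyI[of 1]) (simp add: less_imp_le)
  moreover have "(\<lambda>K. r K / 2) \<longlonglongrightarrow> 0"
    using tendsto_divide[OF r_lim tendsto_const, of 2] by simp
  ultimately have "(\<lambda>K. (r K / 2) powr \<delta>) \<longlonglongrightarrow> 0"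
    by (intro tendsto_zero_powrI[OF _ tendsto_const _ \<open>\<delta> > 0\<close>])
  then have "(\<lambda>K. C * (r K / 2) powr \<delta>) \<longlonglongrightarrow> 0"
    using tendsto_mult_right_zero by blast
  moreover have "1 / (2 * \<sigma> N n) ^ 4 > 0" if "1 \<le> n" "n \<le> N" for N n
    using sigma_pos[OF that] by simp
  moreover have "1 / (2 * \<sigma> N m) ^ 4 \<le> 1 / (2 * \<sigma> N n) ^ 4"
    if "1 \<le> m" "m \<le> n" "n \<le> N" for N m n
    using that sigma_pos[of n N] sigma_mono[of m n N]
    by (intro divide_left_mono power_mono mult_pos_pos zero_less_power) auto
  ultimately show ?thesis
    unfolding fourier_weighted_mean_def F_def[symmetric]
    by (intro weighted_mean_tendsto_zero[where e = "\<lambda>K. C * (r K / 2) powr \<delta>"] F_bounded F_tail)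
qed

lemma hbar_seq_div_h_seq:
  fixes \<sigma> :: "nat \<Rightarrow> nat \<Rightarrow> real" and p :: "real \<Rightarrow> real"
  assumes "\<alpha> > 0" and "1 \<le> N"
    and sigma_pos: "\<And>n. 1 \<le> n \<Longrightarrow> n \<le> N \<Longrightarrow> \<sigma> N n > 0"
    and p_meas: "p \<in> borel_measurable lborel" and p_int: "integrable lborel p"
    and p_total: "(LINT t|lborel. p t) = 1"
    and mean_lt_1: "fourier_weighted_mean \<sigma> p N < 1"
  shows "hbar_seq \<alpha> \<sigma> N / h_seq \<alpha> \<sigma> p N = (1 - fourier_weighted_mean \<sigma> p N) powr (1/4)"
proof -
  define w where "w n = 1 / (2 * \<sigma> N n) ^ 4" for n
  define S where "S = (\<Sum>n=1..N. w n)"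
  define T where "T = (\<Sum>n=1..N. w n * Re (fourier_tf p (2 * \<sigma> N 1 / \<sigma> N n)))"
  define A where "A = fourier_weighted_mean \<sigma> p N"
  have A_eq: "A = T / S"
    by (simp add: A_def T_def S_def w_def fourier_weighted_mean_def)
  define Y where "Y = S / (2 * \<alpha>)"
  have "w n > 0" if "1 \<le> n" "n \<le> N" for n
    using sigma_pos[OF that] by (simp add: w_def)
  then have "S > 0"
    unfolding S_def using \<open>1 \<le> N\<close> by (intro sum_pos) auto
  then have "Y > 0"
    using \<open>\<alpha> > 0\<close> by (simp add: Y_def)
  have "(\<Sum>n=1..N. 1 / (2 * \<sigma> N n) ^ 4 * (LINT t|lborel. (sin (t / \<sigma> N n))\<^sup>2 * p (t / \<sigma> N 1) / \<sigma> N 1))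
      = (\<Sum>n=1..N. w n * (1/2 - Re (fourier_tf p (2 * \<sigma> N 1 / \<sigma> N n)) / 2))"
  proof (intro sum.cong refl)
    fix n assume "n \<in> {1..N}"
    then have "\<sigma> N n > 0" "\<sigma> N 1 > 0"
      using sigma_pos \<open>1 \<le> N\<close> by auto
    then show "1 / (2 * \<sigma> N n) ^ 4 * (LINT t|lborel. (sin (t / \<sigma> N n))\<^sup>2 * p (t / \<sigma> N 1) / \<sigma> N 1)
        = w n * (1/2 - Re (fourier_tf p (2 * \<sigma> N 1 / \<sigma> N n)) / 2)"
      by (subst integral_sin_square_rescaled[OF _ _ p_meas p_int p_total]) (auto simp: w_def)
  qed
  also have "\<dots> = S / 2 - T / 2"
    by (simp add: S_def T_def sum_subtractf sum_divide_distrib right_diff_distrib)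
  also have "\<dots> = S / 2 - A * S / 2"
    using \<open>S > 0\<close> by (simp add: A_eq)
  finally have "h_seq \<alpha> \<sigma> p N = (1 / \<alpha> * (S / 2 - A * S / 2)) powr (-1/4)"
    unfolding h_seq_def by simp
  also have "\<dots> = (Y * (1 - A)) powr (-1/4)"
    unfolding Y_def by (rule arg_cong[where f = "\<lambda>x. x powr _"]) (simp add: field_simps)
  finally have h: "h_seq \<alpha> \<sigma> p N = (Y * (1 - A)) powr (-1/4)" .
  have hbar: "hbar_seq \<alpha> \<sigma> N = Y powr (-1/4)"
    unfolding hbar_seq_def Y_def S_def w_def by (simp add: sum_divide_distrib mult.assoc)
  show ?thesis
    using \<open>Y > 0\<close> mean_lt_1 unfolding h hbar A_def
    by (simp add: powr_mult powr_minus_divide)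
qed

theorem corollary1:
  fixes \<alpha> :: real and \<sigma> :: "nat \<Rightarrow> nat \<Rightarrow> real" and p :: "real \<Rightarrow> real"
    and C\<^sub>\<pi> \<delta> C :: real and r :: "nat \<Rightarrow> real"
  assumes alpha_pos: "\<alpha> > 0"
    and sigma_pos: "\<And>N n. 1 \<le> n \<Longrightarrow> n \<le> N \<Longrightarrow> \<sigma> N n > 0"
    and sigma_mono: "\<And>N m n. 1 \<le> m \<Longrightarrow> m \<le> n \<Longrightarrow> n \<le> N \<Longrightarrow> \<sigma> N n \<le> \<sigma> N m"
    and sigma_lim: "(\<lambda>N. \<sigma> N 1 * (\<Sum>n=1..N. \<sigma> N n powr (-7))
                          * (\<Sum>n=1..N. \<sigma> N n powr (-4)) powr (-3/2)) \<longlonglongrightarrow> 0"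
    and p_meas: "p \<in> borel_measurable lborel"
    and p_nonneg: "\<And>t. p t \<ge> 0"
    and p_int: "integrable lborel p"
    and p_total: "(LINT t|lborel. p t) = 1"
    and Cpi_lt1: "C\<^sub>\<pi> < 1"
    and Cpi_bound: "\<And>\<omega>. \<bar>\<omega>\<bar> \<ge> 2 \<Longrightarrow> cmod (fourier_tf p \<omega>) \<le> C\<^sub>\<pi>"
    and delta_pos: "\<delta> > 0" and C_pos: "C > 0"
    and decay: "\<And>\<omega>. \<omega> \<noteq> 0 \<Longrightarrow> cmod (fourier_tf p \<omega>) \<le> C * \<bar>\<omega>\<bar> powr (-\<delta>)"
    and r_lim: "r \<longlonglongrightarrow> 0"
    and r_bound: "\<And>K N. 1 \<le> K \<Longrightarrow> K \<le> N \<Longrightarrow> \<sigma> N K / \<sigma> N 1 < r K"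
  shows "(\<lambda>N. hbar_seq \<alpha> \<sigma> N / h_seq \<alpha> \<sigma> p N) \<longlonglongrightarrow> 1"
proof -
  let ?A = "fourier_weighted_mean \<sigma> p"
  have "cmod (fourier_tf p \<omega>) \<le> 1" if "\<bar>\<omega>\<bar> \<ge> 2" for \<omega>
    using Cpi_bound[OF that] Cpi_lt1 by linarith
  then have "?A \<longlonglongrightarrow> 0"
    using C_pos
    by (intro fourier_weighted_mean_tendsto_zero[OF sigma_pos sigma_mono _ delta_pos _ decay r_lim r_bound])
       auto
  then have "(\<lambda>N. (1 - ?A N) powr (1/4)) \<longlonglongrightarrow> (1 - 0) powr (1/4)"
    by (intro tendsto_intros) auto
  moreover have "eventually (\<lambda>N. 1 \<le> N \<and> ?A N < 1) sequentially"
    using \<open>?A \<longlonglongrightarrow> 0\<close> by (intro eventually_conj eventually_ge_at_top order_tendstoD(2)) auto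
  then have "eventually (\<lambda>N. (1 - ?A N) powr (1/4) = hbar_seq \<alpha> \<sigma> N / h_seq \<alpha> \<sigma> p N) sequentially"
    by eventually_elim (simp add: hbar_seq_div_h_seq[OF alpha_pos _ sigma_pos p_meas p_int p_total])
  ultimately show ?thesis
    by (simp add: Lim_transform_eventually)
qed

end
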